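(* Assume (H3) and (H0)–(H2). Let $u\in USC(\mathbb T^N;\mathbb R^m)$ be a bounded viscosity subsolution and $v\in LSC(\mathbb T^N;\mathbb R^m)$ a bounded viscosity supersolution of the stationary system (S). Suppose that one of the following holds: (i) (classical case) $\sum_{j=1}^m d_{ij}(x)>0$ for all $x\in\mathbb T^N$ and all $1\le i\le m$; (ii) (degenerate case) $D(x)$ is irreducible for every $x\in\mathbb T^N$, and there exists a function $\Lambda:\mathcal A\to\mathbb R^m$ with $\Lambda\ge 0$ and $\sum_i\Lambda_i>0$ on $\mathcal A$ such that $\sum_{i=1}^m\Lambda_i(x)u_i(x)\le\sum_{i=1}^m\Lambda_i(x)v_i(x)$ for all $x\in\mathcal A$. Then $u\le v$ in $\mathbb T^N$ (componentwise).
   Context: $\mathbb T^N=\mathbb R^N/\mathbb Z^N$; $D(x)=(d_{ij}(x))_{1\le i,j\le m}$. (H3): each $d_{ij}:\mathbb T^N\to\mathbb R$ is continuous and for all $x$: $d_{ii}(x)\ge0$, $d_{ij}(x)\le0$ for $i\ne j$, $\sum_j d_{ij}(x)\ge0$. Irreducible: for every proper subset $\mathcal I\subsetneq\{1,\dots,m\}$ there exist $i\in\mathcal I$, $j\notin\mathcal I$ with $d_{ij}(x)\ne0$. Hamiltonians $H_i(x,p)=F_i(x,p)-f_i(x)$, $i=1,\dots,m$, where (H0) $f_i$ and $F_i$ are continuous and $1$-periodic in $x$; (H1) $F_i(x,\cdot)$ is convex and coercive ($\inf_x F_i(x,p)\to+\infty$ as $|p|\to\infty$) and $F_i(x,p)\ge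 F_i(x,0)=0$ for all $x,p$; (H2) $f_i\ge 0$. Sets: $\mathcal F=\{x:\sum_i f_i(x)=0\}$, $\mathcal D_i=\{x:\sum_j d_{ij}(x)=0\}$, $\mathcal A=\mathcal F\cap\bigcap_{i=1}^m\mathcal D_i$. Stationary system (S): $H_i(x,Du_i)+\sum_{j=1}^m d_{ij}(x)u_j=0$ in $\mathbb T^N$, $1\le i\le m$. An USC $u:\mathbb T^N\to\mathbb R^m$ is a viscosity subsolution of (S) if whenever $\phi\in C^1$, $i\in\{1,\dots,m\}$ and $u_i-\phi$ has a local maximum at $x$, then $H_i(x,D\phi(x))+\sum_j d_{ij}(x)u_j(x)\le0$; an LSC $v$ is a supersolution if whenever $v_i-\phi$ has a local minimum at $x$, then $H_i(x,D\phi(x))+\sum_j d_{ij}(x)v_j(x)\ge0$; a solution is a continuous function that is both. *)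

theory Defs
  imports "HOL-Analysis.Analysis"
begin

text \<open>The torus T^N = R^N / Z^N is modelled by Z^N-periodic functions on R^N,
  with R^N = real^'n.  The index set {1..m} is modelled by a finite type 'm.\<close>

definition periodic :: "(real^'n \<Rightarrow> 'b) \<Rightarrow> bool" where
  "periodic g \<longleftrightarrow> (\<forall>x (k::'n \<Rightarrow> int). g (x + (\<chi> i. of_int (k i))) = g x)"

definition usc :: "(real^'n \<Rightarrow> real) \<Rightarrow> bool" where
  "usc g \<longleftrightarrow> (\<forall>x e. e > 0 \<longrightarrow> (\<exists>d>0. \<forall>y. dist y x < d \<longrightarrow> g y < g x + e))"

definition lsc :: "(real^'n \<Rightarrow> real) \<Rightarrow> bool" where
  "lsc g \<longleftrightarrow> (\<forall>x e. e > 0 \<longrightarrow> (\<exists>d>0. \<forall>y. dist y x < d \<longrightarrow> g x - e < g y))"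

definition C1_grad :: "(real^'n \<Rightarrow> real) \<Rightarrow> (real^'n \<Rightarrow> real^'n) \<Rightarrow> bool" where
  "C1_grad phi Dphi \<longleftrightarrow> (\<forall>x. (phi has_derivative (\<lambda>h. Dphi x \<bullet> h)) (at x)) \<and> continuous_on UNIV Dphi"

definition loc_max :: "(real^'n \<Rightarrow> real) \<Rightarrow> real^'n \<Rightarrow> bool" where
  "loc_max g x \<longleftrightarrow> (\<exists>e>0. \<forall>y. dist y x < e \<longrightarrow> g y \<le> g x)"

definition loc_min :: "(real^'n \<Rightarrow> real) \<Rightarrow> real^'n \<Rightarrow> bool" where
  "loc_min g x \<longleftrightarrow> (\<exists>e>0. \<forall>y. dist y x < e \<longrightarrow> g x \<le> g y)"

definition Ham :: "('m \<Rightarrow> real^'n \<Rightarrow> real^'n \<Rightarrow> real) \<Rightarrow> ('m \<Rightarrow> real^'n \<Rightarrow> real)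
    \<Rightarrow> 'm \<Rightarrow> real^'n \<Rightarrow> real^'n \<Rightarrow> real" where
  "Ham F f i x p = F i x p - f i x"

definition visc_subsol ::
  "('m::finite \<Rightarrow> real^'n \<Rightarrow> real^'n \<Rightarrow> real) \<Rightarrow> ('m \<Rightarrow> real^'n \<Rightarrow> real)
   \<Rightarrow> ('m \<Rightarrow> 'm \<Rightarrow> real^'n \<Rightarrow> real) \<Rightarrow> (real^'n \<Rightarrow> real^'m) \<Rightarrow> bool" where
  "visc_subsol F f d u \<longleftrightarrow> (\<forall>i. usc (\<lambda>x. u x $ i)) \<and>
     (\<forall>phi Dphi i x. C1_grad phi Dphi \<longrightarrow> loc_max (\<lambda>y. u y $ i - phi y) x \<longrightarrow>
        Ham F f i x (Dphi x) + (\<Sum>j\<in>UNIV. d i j x * u x $ j) \<le> 0)"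

definition visc_supersol ::
  "('m::finite \<Rightarrow> real^'n \<Rightarrow> real^'n \<Rightarrow> real) \<Rightarrow> ('m \<Rightarrow> real^'n \<Rightarrow> real)
   \<Rightarrow> ('m \<Rightarrow> 'm \<Rightarrow> real^'n \<Rightarrow> real) \<Rightarrow> (real^'n \<Rightarrow> real^'m) \<Rightarrow> bool" where
  "visc_supersol F f d v \<longleftrightarrow> (\<forall>i. lsc (\<lambda>x. v x $ i)) \<and>
     (\<forall>phi Dphi i x. C1_grad phi Dphi \<longrightarrow> loc_min (\<lambda>y. v y $ i - phi y) x \<longrightarrow>
        Ham F f i x (Dphi x) + (\<Sum>j\<in>UNIV. d i j x * v x $ j) \<ge> 0)"

definition irreducible_at :: "('m \<Rightarrow> 'm \<Rightarrow> real^'n \<Rightarrow> real) \<Rightarrow> real^'n \<Rightarrow> bool" where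
  "irreducible_at d x \<longleftrightarrow> (\<forall>I. I \<noteq> {} \<and> I \<noteq> UNIV \<longrightarrow> (\<exists>i\<in>I. \<exists>j. j \<notin> I \<and> d i j x \<noteq> 0))"

definition setF :: "('m::finite \<Rightarrow> real^'n \<Rightarrow> real) \<Rightarrow> (real^'n) set" where
  "setF f = {x. (\<Sum>i\<in>UNIV. f i x) = 0}"

definition setD :: "('m::finite \<Rightarrow> 'm \<Rightarrow> real^'n \<Rightarrow> real) \<Rightarrow> 'm \<Rightarrow> (real^'n) set" where
  "setD d i = {x. (\<Sum>j\<in>UNIV. d i j x) = 0}"

definition setA :: "('m::finite \<Rightarrow> real^'n \<Rightarrow> real) \<Rightarrow> ('m \<Rightarrow> 'm \<Rightarrow> real^'n \<Rightarrow> real) \<Rightarrow> (real^'n) set" where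
  "setA f d = setF f \<inter> (\<Inter>i. setD d i)"

end

theory Submission
  imports Defs
begin

text \<open>
  Fix \<mu> \<in> (0,1) and put w_k = \<mu> u_k - v_k.  Each w_k is upper semicontinuous and
  periodic, so max_{k,x} w_k(x) = M is attained at some (j, x0).  Doubling the variables
  at (j, x0) -- maximising \<mu> u_j(x) - v_j(y) - \<kappa>|x - y|^2 - |x - x0|^2 and letting \<kappa> \<rightarrow> \<infinity>,
  with convexity of F_j used to absorb the factor \<mu> -- yields
     \<Sum>_k d_jk(x0) w_k(x0) + (1 - \<mu>) f_j(x0) \<le> 0          (lemma max_point_inequality)
  for every index j at which the maximum is attained.  The sign structure of D (a
  Z-matrix with nonnegative row sums) then shows that a positive maximum M forces
  degenerate rows at all maximal indices.  In the classical case this is impossible;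
  in the degenerate case irreducibility makes all indices maximal, puts x0 into the
  set A, and the weighted inequality for \<Lambda> bounds M by (1 - \<mu>) B, where B bounds u and v.
  Hence \<mu> u - v \<le> (1 - \<mu>) B (lemma scaled_comparison), and \<mu> \<rightarrow> 1 gives u \<le> v.
\<close>

definition usc_on :: "'a::metric_space set \<Rightarrow> ('a \<Rightarrow> real) \<Rightarrow> bool" where
  "usc_on K g \<longleftrightarrow> (\<forall>x\<in>K. \<forall>e>0. \<exists>d>0. \<forall>y\<in>K. dist y x < d \<longrightarrow> g y < g x + e)"

lemma usc_iff_usc_on: "usc g \<longleftrightarrow> usc_on UNIV g"
  unfolding usc_def usc_on_def by blast

lemma lsc_iff_usc_on_uminus: "lsc g \<longleftrightarrow> usc_on UNIV (\<lambda>x. - g x)"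
proof -
  have "(- g y < - g x + e) \<longleftrightarrow> (g x - e < g y)" for x y e by linarith
  then show ?thesis unfolding lsc_def usc_on_def by simp
qed

lemma usc_on_subset: "usc_on K g \<Longrightarrow> L \<subseteq> K \<Longrightarrow> usc_on L g"
  unfolding usc_on_def by blast

lemma usc_on_continuous: "continuous_on K g \<Longrightarrow> usc_on K g"
  unfolding usc_on_def continuous_on_iff dist_real_def by (metis abs_diff_less_iff)

lemma usc_on_add:
  assumes "usc_on K g" "usc_on K h"
  shows "usc_on K (\<lambda>x. g x + h x)"
  unfolding usc_on_def
proof (intro ballI allI impI)
  fix x and e :: real assume x: "x \<in> K" and e: "e > 0"
  obtain d1 where d1: "d1 > 0" "\<forall>y\<in>K. dist y x < d1 \<longrightarrow> g y < g x + e/2"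
    using assms(1) x e unfolding usc_on_def by (meson half_gt_zero)
  obtain d2 where d2: "d2 > 0" "\<forall>y\<in>K. dist y x < d2 \<longrightarrow> h y < h x + e/2"
    using assms(2) x e unfolding usc_on_def by (meson half_gt_zero)
  show "\<exists>d>0. \<forall>y\<in>K. dist y x < d \<longrightarrow> g y + h y < g x + h x + e"
    using d1 d2 by (intro exI[of _ "min d1 d2"]) force
qed

lemma usc_on_cmult:
  assumes "usc_on K g" "c \<ge> 0"
  shows "usc_on K (\<lambda>x. c * g x)"
  unfolding usc_on_def
proof (intro ballI allI impI)
  fix x and e :: real assume x: "x \<in> K" and e: "e > 0"
  have e': "e / (c + 1) > 0" using e assms(2) by simp
  obtain d where d: "d > 0" "\<forall>y\<in>K. dist y x < d \<longrightarrow> g y < g x + e / (c + 1)"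
    using assms(1) x e' unfolding usc_on_def by blast
  have small: "c * (e / (c + 1)) < e"
    using e assms(2) by (simp add: field_simps)
  have "c * g y < c * g x + e" if "y \<in> K" "dist y x < d" for y
  proof -
    have "c * g y \<le> c * (g x + e / (c + 1))"
      using d that assms(2) by (intro mult_left_mono) auto
    then show ?thesis using small by (simp add: algebra_simps)
  qed
  then show "\<exists>d>0. \<forall>y\<in>K. dist y x < d \<longrightarrow> c * g y < c * g x + e"
    using d(1) by blast
qed

lemma usc_on_compose_nonexpansive:
  assumes "usc_on UNIV g" "\<And>x y. dist (\<phi> x) (\<phi> y) \<le> dist x y"
  shows "usc_on K (\<lambda>x. g (\<phi> x))"
  unfolding usc_on_def
proof (intro ballI allI impI)
  fix x and e :: real assume "e > 0"
  then obtain d where "d > 0" "\<forall>z. dist z (\<phi> x) < d \<longrightarrow> g z < g (\<phi> x) + e"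
    using assms(1) unfolding usc_on_def by blast
  then show "\<exists>d>0. \<forall>y\<in>K. dist y x < d \<longrightarrow> g (\<phi> y) < g (\<phi> x) + e"
    using assms(2) by (meson le_less_trans)
qed

lemma viscosity_solutions_semicontinuous:
  assumes "visc_subsol F f d u" "visc_supersol F f d v" "\<mu> \<ge> 0"
  shows "usc_on UNIV (\<lambda>x. \<mu> * u x $ k)" and "usc_on UNIV (\<lambda>y. - v y $ k)"
  using assms usc_on_cmult[of UNIV "\<lambda>x. u x $ k" \<mu>]
  unfolding visc_subsol_def visc_supersol_def usc_iff_usc_on lsc_iff_usc_on_uminus by auto

text \<open>An upper semicontinuous function attains its maximum on a nonempty compact set
  (finite subcover of the sets where g stays below a strictly larger value).\<close>
lemma usc_on_attains_max:
  fixes g :: "'a::metric_space \<Rightarrow> real"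
  assumes K: "compact K" "K \<noteq> {}" and usc: "usc_on K g"
  shows "\<exists>x\<in>K. \<forall>y\<in>K. g y \<le> g x"
proof (rule ccontr)
  assume "\<not> ?thesis"
  then have "\<forall>x\<in>K. \<exists>y\<in>K. g y > g x" by (auto simp: not_le)
  then obtain Y where Y: "\<And>x. x \<in> K \<Longrightarrow> Y x \<in> K \<and> g (Y x) > g x" by metis
  define V where "V x = \<Union>{ball z d | z d. d > 0 \<and> (\<forall>w\<in>K. dist w z < d \<longrightarrow> g w < g (Y x))}" for x
  have open_V: "open (V x)" for x unfolding V_def by auto
  have V_below: "K \<inter> V x \<subseteq> {w. g w < g (Y x)}" for x
    unfolding V_def by (auto simp: dist_commute)
  have cover: "K \<subseteq> (\<Union>x\<in>K. V x)"
  proof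
    fix x assume x: "x \<in> K"
    have "g (Y x) - g x > 0" using Y[OF x] by simp
    then obtain d where "d > 0" "\<forall>y\<in>K. dist y x < d \<longrightarrow> g y < g x + (g (Y x) - g x)"
      using usc x unfolding usc_on_def by blast
    then have "x \<in> V x" unfolding V_def by force
    then show "x \<in> (\<Union>x\<in>K. V x)" using x by blast
  qed
  obtain C where C: "C \<subseteq> K" "finite C" "K \<subseteq> (\<Union>c\<in>C. V c)"
    using compactE_image[OF K(1) open_V cover] by blast
  then have "C \<noteq> {}" using K(2) by auto
  define m where "m = Max ((\<lambda>c. g (Y c)) ` C)"
  have "m \<in> (\<lambda>c. g (Y c)) ` C"
    unfolding m_def using C(2) \<open>C \<noteq> {}\<close> by (intro Max_in) auto
  then obtain c0 where c0: "c0 \<in> C" "m = g (Y c0)" by auto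
  have "Y c0 \<in> K" using Y c0 C by auto
  then obtain c where c: "c \<in> C" "Y c0 \<in> V c" using C(3) by auto
  then have "g (Y c0) < g (Y c)" using V_below \<open>Y c0 \<in> K\<close> by auto
  moreover have "g (Y c) \<le> m" unfolding m_def using c C(2) by auto
  ultimately show False using c0 by simp
qed

lemma usc_on_eventually:
  assumes "usc_on UNIV g" "(X \<longlongrightarrow> z) F" "e > 0"
  shows "eventually (\<lambda>n. g (X n) < g z + e) F"
proof -
  obtain d where d: "d > 0" "\<forall>y. dist y z < d \<longrightarrow> g y < g z + e"
    using assms(1,3) unfolding usc_on_def by blast
  have "eventually (\<lambda>n. dist (X n) z < d) F" using assms(2) d(1) tendsto_iff by blast
  then show ?thesis by eventually_elim (use d in auto)
qed

lemma usc_difference_limsup: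
  assumes "usc_on UNIV a" "usc_on UNIV (\<lambda>y. - b y)" "(X \<longlongrightarrow> z) F" "(Y \<longlongrightarrow> z) F" "\<delta> > 0"
  shows "eventually (\<lambda>n. a (X n) - b (Y n) < a z - b z + \<delta>) F"
proof -
  have "eventually (\<lambda>n. a (X n) < a z + \<delta>/2) F"
    using usc_on_eventually[OF assms(1,3)] assms(5) by simp
  moreover have "eventually (\<lambda>n. - b (Y n) < - b z + \<delta>/2) F"
    using usc_on_eventually[OF assms(2,4)] assms(5) by simp
  ultimately show ?thesis by eventually_elim simp
qed

lemma periodic_reduce:
  fixes x :: "real^'n"
  shows "x - (\<chi> i. of_int \<lfloor>x$i\<rfloor>) \<in> cbox 0 (\<chi> i. 1)"
    and "periodic g \<Longrightarrow> g (x - (\<chi> i. of_int \<lfloor>x$i\<rfloor>)) = g x"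
proof -
  have "x $ i - real_of_int \<lfloor>x $ i\<rfloor> \<le> 1" for i by linarith
  then show "x - (\<chi> i. of_int \<lfloor>x$i\<rfloor>) \<in> cbox 0 (\<chi> i. 1)"
    unfolding mem_box_cart(2) by (simp add: of_int_floor_le)
  assume "periodic g"
  then have "\<forall>y k. g (y + (\<chi> i. of_int (k i))) = g y" unfolding periodic_def .
  from this[rule_format, of "x - (\<chi> i. of_int \<lfloor>x$i\<rfloor>)" "\<lambda>i. \<lfloor>x$i\<rfloor>"]
  show "g (x - (\<chi> i. of_int \<lfloor>x$i\<rfloor>)) = g x" by simp
qed

lemma periodic_family_attains_max:
  fixes g :: "'m::finite \<Rightarrow> real^'n \<Rightarrow> real"
  assumes per: "\<And>k. periodic (g k)" and usc: "\<And>k. usc_on UNIV (g k)"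
  shows "\<exists>j x0. \<forall>k x. g k x \<le> g j x0"
proof -
  define K where "K = cbox (0::real^'n) (\<chi> i. 1)"
  have K: "compact K" "K \<noteq> {}" unfolding K_def using periodic_reduce(1)[of 0] by auto
  have "\<exists>y\<in>K. \<forall>z\<in>K. g k z \<le> g k y" for k
    using usc_on_attains_max[OF K usc_on_subset[OF usc]] by blast
  then obtain xs where xs: "\<And>k. xs k \<in> K" "\<And>k z. z \<in> K \<Longrightarrow> g k z \<le> g k (xs k)" by metis
  define h where "h k = g k (xs k)" for k
  have "Max (range h) \<in> range h" by (intro Max_in) auto
  then obtain j where j: "Max (range h) = h j" by (metis imageE)
  have "g k x \<le> g j (xs j)" for k x
  proof -
    have "g k x = g k (x - (\<chi> i. of_int \<lfloor>x$i\<rfloor>))" using periodic_reduce(2)[OF per] by simp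
    also have "\<dots> \<le> g k (xs k)" using xs(2) periodic_reduce(1) unfolding K_def by blast
    also have "\<dots> \<le> g j (xs j)" using Max_ge[of "range h" "h k"] unfolding j h_def by simp
    finally show ?thesis .
  qed
  then show ?thesis by blast
qed

lemma C1_grad_quadratic:
  fixes y z :: "real^'n"
  shows "C1_grad (\<lambda>x. a + b * ((x - y) \<bullet> (x - y)) + c * ((x - z) \<bullet> (x - z)))
                 (\<lambda>x. (2 * b) *\<^sub>R (x - y) + (2 * c) *\<^sub>R (x - z))"
  unfolding C1_grad_def
proof (intro conjI allI)
  fix x :: "real^'n"
  show "((\<lambda>x. a + b * ((x - y) \<bullet> (x - y)) + c * ((x - z) \<bullet> (x - z))) has_derivative
         (\<lambda>h. ((2 * b) *\<^sub>R (x - y) + (2 * c) *\<^sub>R (x - z)) \<bullet> h)) (at x)"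
    by (rule derivative_eq_intros refl | simp)+ (simp add: algebra_simps inner_commute)
next
  show "continuous_on UNIV (\<lambda>x. (2 * b) *\<^sub>R (x - y) + (2 * c) *\<^sub>R (x - z))"
    by (intro continuous_intros)
qed

text \<open>The doubled functional a x - b y - \<kappa>|x - y|^2 - |x - x0|^2; the last term localises its
  maximisers near the chosen maximum point x0 of a - b.\<close>
definition penalized ::
  "(real^'n \<Rightarrow> real) \<Rightarrow> (real^'n \<Rightarrow> real) \<Rightarrow> real \<Rightarrow> real^'n \<Rightarrow> real^'n \<Rightarrow> real^'n \<Rightarrow> real" where
  "penalized a b \<kappa> x0 x y = a x - b y - \<kappa> * ((x - y) \<bullet> (x - y)) - (x - x0) \<bullet> (x - x0)"

lemma norm_le_sqrt_of_inner_le: "v \<bullet> v \<le> c \<Longrightarrow> norm v \<le> sqrt c"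
  by (simp add: norm_eq_sqrt_inner)

lemma penalized_max_bounds:
  assumes max: "\<And>x y. penalized a b \<kappa> x0 x y \<le> penalized a b \<kappa> x0 X Y"
    and bdd: "\<And>x. \<bar>a x\<bar> \<le> B" "\<And>x. \<bar>b x\<bar> \<le> B"
  shows "a x0 - b x0 + \<kappa> * ((X - Y) \<bullet> (X - Y)) + (X - x0) \<bullet> (X - x0) \<le> a X - b Y"
    and "\<kappa> * ((X - Y) \<bullet> (X - Y)) + (X - x0) \<bullet> (X - x0) \<le> 4 * B"
proof -
  show low: "a x0 - b x0 + \<kappa> * ((X - Y) \<bullet> (X - Y)) + (X - x0) \<bullet> (X - x0) \<le> a X - b Y"
    using max[of x0 x0] unfolding penalized_def by simp
  show "\<kappa> * ((X - Y) \<bullet> (X - Y)) + (X - x0) \<bullet> (X - x0) \<le> 4 * B"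
    using low bdd[of x0] bdd[of X] bdd[of Y] by (simp add: abs_le_iff)
qed

text \<open>The doubled functional attains its maximum: on a large compact set by upper
  semicontinuity, and outside it the penalties dominate.\<close>
lemma penalized_max_exists:
  fixes a b :: "real^'n \<Rightarrow> real"
  assumes a: "usc_on UNIV a" and b: "usc_on UNIV (\<lambda>y. - b y)"
    and bdd: "\<And>x. \<bar>a x\<bar> \<le> B" "\<And>x. \<bar>b x\<bar> \<le> B" and \<kappa>: "\<kappa> \<ge> 1"
  shows "\<exists>X Y. \<forall>x y. penalized a b \<kappa> x0 x y \<le> penalized a b \<kappa> x0 X Y"
proof -
  define R where "R = 4 * B + 1"
  have B0: "B \<ge> 0" using bdd(1)[of x0] by linarith
  then have R: "R \<ge> 1" unfolding R_def by simp
  have "1 * R \<le> R * R" using R by (intro mult_right_mono) auto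
  then have RR: "R * R > 4 * B" unfolding R_def by simp
  define K where "K = cball x0 R \<times> cball x0 (2 * R)"
  define \<Phi> where "\<Phi> p = penalized a b \<kappa> x0 (fst p) (snd p)" for p
  have "usc_on K (\<lambda>p. a (fst p) + - b (snd p)
      + - (\<kappa> * ((fst p - snd p) \<bullet> (fst p - snd p)) + (fst p - x0) \<bullet> (fst p - x0)))"
    by (intro usc_on_add usc_on_compose_nonexpansive[OF a dist_fst_le]
        usc_on_compose_nonexpansive[OF b dist_snd_le] usc_on_continuous continuous_intros)
  then have usc: "usc_on K \<Phi>" unfolding \<Phi>_def penalized_def by (simp add: algebra_simps)
  have K: "compact K" "(x0, x0) \<in> K" unfolding K_def using R by (auto intro: compact_Times)
  obtain p where p: "p \<in> K" "\<forall>q\<in>K. \<Phi> q \<le> \<Phi> p"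
    using usc_on_attains_max[OF K(1) _ usc] K(2) by blast
  have far: "penalized a b \<kappa> x0 x y < penalized a b \<kappa> x0 x0 x0" if "(x, y) \<notin> K" for x y
  proof -
    have big: "v \<bullet> v > 4 * B" if "norm v > R" for v :: "real^'n"
    proof -
      have "R * R < norm v * norm v" using mult_strict_mono[OF that that] R that by force
      then show ?thesis using RR by (simp add: power2_norm_eq_inner[symmetric] power2_eq_square)
    qed
    have "4 * B < \<kappa> * ((x - y) \<bullet> (x - y)) + (x - x0) \<bullet> (x - x0)"
    proof (cases "norm (x - x0) > R")
      case True
      have "\<kappa> * ((x - y) \<bullet> (x - y)) \<ge> 0" using \<kappa> by simp
      then show ?thesis using big[OF True] by linarith
    next
      case False
      then have "dist x0 y > 2 * R" "dist x0 x \<le> R"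
        using that unfolding K_def by (auto simp: dist_norm norm_minus_commute)
      then have "norm (x - y) > R" using dist_triangle[of x0 y x] by (simp add: dist_norm)
      then have "4 * B < 1 * ((x - y) \<bullet> (x - y))" using big by simp
      also have "\<dots> \<le> \<kappa> * ((x - y) \<bullet> (x - y))" using \<kappa> by (intro mult_right_mono) auto
      finally show ?thesis using inner_ge_zero[of "x - x0"] by linarith
    qed
    then show ?thesis using bdd[of x0] bdd[of x] bdd[of y] unfolding penalized_def by (simp add: abs_le_iff)
  qed
  have "penalized a b \<kappa> x0 x y \<le> \<Phi> p" for x y
    using p far[of x y] p(2)[rule_format, OF K(2)] unfolding \<Phi>_def by fastforce
  then show ?thesis unfolding \<Phi>_def by blast
qed

lemma penalized_max_location:
  assumes max: "\<And>x y. penalized a b \<kappa> x0 x y \<le> penalized a b \<kappa> x0 X Y"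
    and bdd: "\<And>x. \<bar>a x\<bar> \<le> B" "\<And>x. \<bar>b x\<bar> \<le> B" and \<kappa>: "\<kappa> \<ge> 1"
  shows "X \<in> cball x0 (sqrt (4 * B))" and "Y \<in> cball x0 (2 * sqrt (4 * B))"
proof -
  note est = penalized_max_bounds(2)[OF max bdd]
  have "1 * ((X - Y) \<bullet> (X - Y)) \<le> \<kappa> * ((X - Y) \<bullet> (X - Y))"
    using \<kappa> by (intro mult_right_mono) auto
  moreover have "(X - x0) \<bullet> (X - x0) \<ge> 0" "(X - Y) \<bullet> (X - Y) \<ge> 0" by auto
  ultimately have "(X - Y) \<bullet> (X - Y) \<le> 4 * B" "(X - x0) \<bullet> (X - x0) \<le> 4 * B"
    using est by linarith+
  then have XY: "norm (X - Y) \<le> sqrt (4 * B)" and X: "norm (X - x0) \<le> sqrt (4 * B)"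
    using norm_le_sqrt_of_inner_le by blast+
  then show "X \<in> cball x0 (sqrt (4 * B))" by (simp add: dist_norm norm_minus_commute)
  have "norm (Y - x0) \<le> norm (X - Y) + norm (X - x0)"
    using norm_triangle_ineq4[of "X - x0" "X - Y"] by simp
  then show "Y \<in> cball x0 (2 * sqrt (4 * B))"
    using XY X by (simp add: dist_norm norm_minus_commute)
qed

text \<open>If x0 maximises a - b, then along a subsequence the maximisers for \<kappa> = n + 1 converge
  to (x0, x0): X n - Y n \<rightarrow> 0 from the penalty bound, and the limit is x0 by upper
  semicontinuity.\<close>
lemma penalized_maxima_concentrate:
  fixes a b :: "real^'n \<Rightarrow> real" and X Y :: "nat \<Rightarrow> real^'n"
  assumes a: "usc_on UNIV a" and b: "usc_on UNIV (\<lambda>y. - b y)"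
    and bdd: "\<And>x. \<bar>a x\<bar> \<le> B" "\<And>x. \<bar>b x\<bar> \<le> B"
    and top: "\<And>x. a x - b x \<le> a x0 - b x0"
    and max: "\<And>n x y. penalized a b (real n + 1) x0 x y \<le> penalized a b (real n + 1) x0 (X n) (Y n)"
  shows "\<exists>r. strict_mono r \<and> (X \<circ> r) \<longlonglongrightarrow> x0 \<and> (Y \<circ> r) \<longlonglongrightarrow> x0"
proof -
  note low = penalized_max_bounds(1)[OF max bdd]
  note est = penalized_max_bounds(2)[OF max bdd]
  have "range X \<subseteq> cball x0 (sqrt (4 * B))"
    using penalized_max_location(1)[OF max bdd] by auto
  then have "bounded (range X)" by (rule bounded_subset[OF bounded_cball])
  then obtain z r where r: "strict_mono r" and Xz: "(X \<circ> r) \<longlonglongrightarrow> z"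
    using bounded_imp_convergent_subsequence by blast
  have gap: "(\<lambda>n. X n - Y n) \<longlonglongrightarrow> 0"
  proof (rule Lim_null_comparison)
    have "norm (X n - Y n) \<le> sqrt (4 * B * inverse (real (Suc n)))" for n
    proof (rule norm_le_sqrt_of_inner_le)
      have "(real n + 1) * ((X n - Y n) \<bullet> (X n - Y n)) \<le> 4 * B"
        using est[of n] inner_ge_zero[of "X n - x0"] by linarith
      then show "(X n - Y n) \<bullet> (X n - Y n) \<le> 4 * B * inverse (real (Suc n))"
        by (simp add: field_simps)
    qed
    then show "\<forall>\<^sub>F n in sequentially. norm (X n - Y n) \<le> sqrt (4 * B * inverse (real (Suc n)))"
      by simp
    have "(\<lambda>n. sqrt (4 * B * inverse (real (Suc n)))) \<longlonglongrightarrow> sqrt (4 * B * 0)"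
      by (intro tendsto_intros LIMSEQ_inverse_real_of_nat)
    then show "(\<lambda>n. sqrt (4 * B * inverse (real (Suc n)))) \<longlonglongrightarrow> 0" by simp
  qed
  have Yz: "(Y \<circ> r) \<longlonglongrightarrow> z"
  proof -
    have "(\<lambda>n. (X \<circ> r) n - ((\<lambda>n. X n - Y n) \<circ> r) n) \<longlonglongrightarrow> z - 0"
      by (intro tendsto_diff Xz LIMSEQ_subseq_LIMSEQ[OF gap r])
    then show ?thesis by (simp add: o_def)
  qed
  \<comment> \<open>At the limit point the upper semicontinuous gap a - b would exceed its maximum
      unless the penalty term (X - x0) \<bullet> (X - x0) vanishes.\<close>
  have near: "(z - x0) \<bullet> (z - x0) \<le> \<delta>" if \<delta>: "\<delta> > 0" for \<delta>
  proof (rule tendsto_upperbound)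
    show "(\<lambda>n. ((X \<circ> r) n - x0) \<bullet> ((X \<circ> r) n - x0)) \<longlonglongrightarrow> (z - x0) \<bullet> (z - x0)"
      by (intro tendsto_intros Xz)
    have "eventually (\<lambda>n. a ((X \<circ> r) n) - b ((Y \<circ> r) n) < a z - b z + \<delta>) sequentially"
      by (rule usc_difference_limsup[OF a b Xz Yz \<delta>])
    then show "eventually (\<lambda>n. ((X \<circ> r) n - x0) \<bullet> ((X \<circ> r) n - x0) \<le> \<delta>) sequentially"
    proof eventually_elim
      case (elim n)
      have "(real (r n) + 1) * ((X (r n) - Y (r n)) \<bullet> (X (r n) - Y (r n))) \<ge> 0" by simp
      then show ?case using elim low[of "r n"] top[of z] unfolding o_def by linarith
    qed
  qed simp
  have "(z - x0) \<bullet> (z - x0) \<le> 0"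
    using near by (rule field_le_epsilon) simp
  then have "z = x0" using inner_ge_zero[of "z - x0"] by simp
  then show ?thesis using r Xz Yz by blast
qed

lemma concentrating_penalized_maximisers:
  fixes a b :: "real^'n \<Rightarrow> real"
  assumes a: "usc_on UNIV a" and b: "usc_on UNIV (\<lambda>y. - b y)"
    and bdd: "\<And>x. \<bar>a x\<bar> \<le> B" "\<And>x. \<bar>b x\<bar> \<le> B"
    and top: "\<And>x. a x - b x \<le> a x0 - b x0"
  obtains X Y \<kappa> where "\<And>n x y. penalized a b (\<kappa> n) x0 x y \<le> penalized a b (\<kappa> n) x0 (X n) (Y n)"
    and "\<And>n. \<kappa> n \<ge> 1" and "X \<longlonglongrightarrow> x0" and "Y \<longlonglongrightarrow> x0"
    and "\<And>n. a x0 - b x0 \<le> a (X n) - b (Y n)"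
proof -
  have "\<exists>X Y. \<forall>x y. penalized a b (real n + 1) x0 x y \<le> penalized a b (real n + 1) x0 X Y" for n
    by (rule penalized_max_exists[OF a b bdd]) simp
  then obtain X Y where max: "\<And>n x y. penalized a b (real n + 1) x0 x y \<le> penalized a b (real n + 1) x0 (X n) (Y n)"
    by metis
  then obtain r where "(X \<circ> r) \<longlonglongrightarrow> x0" "(Y \<circ> r) \<longlonglongrightarrow> x0"
    using penalized_maxima_concentrate[OF a b bdd top] by blast
  moreover have "a x0 - b x0 \<le> a (X n) - b (Y n)" for n
  proof -
    have "(real n + 1) * ((X n - Y n) \<bullet> (X n - Y n)) \<ge> 0" by simp
    then show ?thesis using penalized_max_bounds(1)[OF max bdd, of n] inner_ge_zero[of "X n - x0"] by linarith
  qed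
  ultimately show ?thesis
    using max by (intro that[of "\<lambda>n. real (r n) + 1" "X \<circ> r" "Y \<circ> r"]) auto
qed

text \<open>The subsolution test has gradient G with \<mu> G = P + Q; convexity and F(x,0) = 0 give
  F(X, P + Q) \<le> \<mu> F(X, G).\<close>
lemma viscosity_at_penalized_max:
  fixes F :: "'m::finite \<Rightarrow> real^'n \<Rightarrow> real^'n \<Rightarrow> real"
  assumes sub: "visc_subsol F f d u" and sup: "visc_supersol F f d v"
    and conv: "\<And>x. convex_on UNIV (F j x)" and F0: "\<And>x. F j x 0 = 0"
    and mu: "0 < \<mu>" "\<mu> \<le> 1"
    and max: "\<And>x y. penalized (\<lambda>x. \<mu> * u x $ j) (\<lambda>y. v y $ j) \<kappa> x0 x y
                  \<le> penalized (\<lambda>x. \<mu> * u x $ j) (\<lambda>y. v y $ j) \<kappa> x0 X Y"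
  shows "F j X ((2 * \<kappa>) *\<^sub>R (X - Y) + 2 *\<^sub>R (X - x0)) \<le> \<mu> * (f j X - (\<Sum>k\<in>UNIV. d j k X * u X $ k))"
    and "f j Y - (\<Sum>k\<in>UNIV. d j k Y * v Y $ k) \<le> F j Y ((2 * \<kappa>) *\<^sub>R (X - Y))"
proof -
  \<comment> \<open>Freezing y = Y, the function x \<mapsto> u x $ j - \<phi> x has a maximum at X.\<close>
  define G where "G = (2 * (\<kappa> / \<mu>)) *\<^sub>R (X - Y) + (2 * (1 / \<mu>)) *\<^sub>R (X - x0)"
  let ?\<phi> = "\<lambda>x. v Y $ j / \<mu> + (\<kappa> / \<mu>) * ((x - Y) \<bullet> (x - Y)) + (1 / \<mu>) * ((x - x0) \<bullet> (x - x0))"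
  have "u x $ j - ?\<phi> x = penalized (\<lambda>x. \<mu> * u x $ j) (\<lambda>y. v y $ j) \<kappa> x0 x Y / \<mu>" for x
    unfolding penalized_def using mu by (simp add: field_simps)
  then have "loc_max (\<lambda>x. u x $ j - ?\<phi> x) X"
    unfolding loc_max_def using max[of _ Y] mu by (intro exI[of _ 1]) (auto intro: divide_right_mono)
  then have "Ham F f j X G + (\<Sum>k\<in>UNIV. d j k X * u X $ k) \<le> 0"
    using sub C1_grad_quadratic unfolding visc_subsol_def G_def by blast
  then have "\<mu> * F j X G \<le> \<mu> * (f j X - (\<Sum>k\<in>UNIV. d j k X * u X $ k))"
    using mu unfolding Ham_def by (intro mult_left_mono) auto
  moreover have "F j X (\<mu> *\<^sub>R G) \<le> \<mu> * F j X G"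
    using convex_onD[OF conv, of \<mu> 0 G] mu F0 by simp
  moreover have "\<mu> *\<^sub>R G = (2 * \<kappa>) *\<^sub>R (X - Y) + 2 *\<^sub>R (X - x0)"
    unfolding G_def using mu by (simp add: scaleR_add_right)
  ultimately show "F j X ((2 * \<kappa>) *\<^sub>R (X - Y) + 2 *\<^sub>R (X - x0)) \<le> \<mu> * (f j X - (\<Sum>k\<in>UNIV. d j k X * u X $ k))"
    by simp
  \<comment> \<open>Freezing x = X, the function y \<mapsto> v y $ j - \<psi> y has a minimum at Y.\<close>
  let ?\<psi> = "\<lambda>y. (\<mu> * u X $ j - (X - x0) \<bullet> (X - x0)) + (- \<kappa>) * ((y - X) \<bullet> (y - X)) + 0 * ((y - X) \<bullet> (y - X))"
  have "(X - y) \<bullet> (X - y) = (y - X) \<bullet> (y - X)" for y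
    by (simp add: inner_diff_left inner_diff_right inner_commute)
  then have "v y $ j - ?\<psi> y = - penalized (\<lambda>x. \<mu> * u x $ j) (\<lambda>y. v y $ j) \<kappa> x0 X y" for y
    unfolding penalized_def by (simp add: algebra_simps)
  then have "loc_min (\<lambda>y. v y $ j - ?\<psi> y) Y"
    unfolding loc_min_def using max[of X] by (intro exI[of _ 1]) auto
  then have "Ham F f j Y ((2 * - \<kappa>) *\<^sub>R (Y - X) + (2 * 0) *\<^sub>R (Y - X)) + (\<Sum>k\<in>UNIV. d j k Y * v Y $ k) \<ge> 0"
    using sup C1_grad_quadratic unfolding visc_supersol_def by blast
  moreover have "(2 * - \<kappa>) *\<^sub>R (Y - X) + (2 * 0) *\<^sub>R (Y - X) = (2 * \<kappa>) *\<^sub>R (X - Y)"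
    by (simp add: algebra_simps)
  ultimately show "f j Y - (\<Sum>k\<in>UNIV. d j k Y * v Y $ k) \<le> F j Y ((2 * \<kappa>) *\<^sub>R (X - Y))"
    unfolding Ham_def by simp
qed

lemma eventually_product_above_nonneg:
  fixes c w :: "nat \<Rightarrow> real"
  assumes c: "c \<longlonglongrightarrow> c0" "\<And>n. c n \<ge> 0" and w: "\<And>n. w n \<ge> L" and e: "e > 0"
  shows "eventually (\<lambda>n. c0 * L - e < c n * w n) sequentially"
proof -
  have "(\<lambda>n. c n * L) \<longlonglongrightarrow> c0 * L" by (intro tendsto_intros c(1))
  then have "eventually (\<lambda>n. c0 * L - e < c n * L) sequentially"
    using e by (intro order_tendstoD(1)) auto
  then show ?thesis
  proof eventually_elim
    case (elim n)
    have "c n * L \<le> c n * w n" using c(2) w by (intro mult_left_mono) auto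
    then show ?case using elim by linarith
  qed
qed

lemma eventually_product_above_nonpos:
  fixes c w :: "nat \<Rightarrow> real"
  assumes c: "c \<longlonglongrightarrow> c0" "\<And>n. c n \<le> 0"
    and w: "\<And>\<delta>. \<delta> > 0 \<Longrightarrow> eventually (\<lambda>n. w n < L + \<delta>) sequentially" and e: "e > 0"
  shows "eventually (\<lambda>n. c0 * L - e < c n * w n) sequentially"
proof -
  define \<delta> where "\<delta> = e / (2 * (\<bar>c0\<bar> + 1))"
  have \<delta>: "\<delta> > 0" unfolding \<delta>_def using e by (simp add: add_pos_nonneg)
  have "\<bar>c0 * \<delta>\<bar> \<le> e / 2"
    unfolding \<delta>_def using e by (simp add: abs_mult field_simps)
  then have c0\<delta>: "- (e / 2) \<le> c0 * \<delta>" by linarith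
  have "(\<lambda>n. c n * (L + \<delta>)) \<longlonglongrightarrow> c0 * (L + \<delta>)" by (intro tendsto_intros c(1))
  then have "eventually (\<lambda>n. c0 * (L + \<delta>) - e / 2 < c n * (L + \<delta>)) sequentially"
    using e by (intro order_tendstoD(1)) auto
  with w[OF \<delta>] show ?thesis
  proof eventually_elim
    case (elim n)
    have "c n * (L + \<delta>) \<le> c n * w n" using c(2) elim(1) by (intro mult_left_mono_neg) auto
    then show ?case using elim(2) c0\<delta> by (simp add: distrib_left)
  qed
qed

text \<open>Lower limit of the coupling term c(X) a(X) - c(Y) b(Y): the coefficient drift vanishes
  by continuity of c, and the rest is handled by the sign of c.\<close>
lemma coupling_term_eventually:
  fixes c a b :: "real^'n \<Rightarrow> real" and X Y :: "nat \<Rightarrow> real^'n"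
  assumes c: "continuous_on UNIV c" and X: "X \<longlonglongrightarrow> x0" and Y: "Y \<longlonglongrightarrow> x0"
    and bdd: "\<And>y. \<bar>b y\<bar> \<le> B"
    and sign: "((\<forall>x. c x \<ge> 0) \<and> (\<forall>n. a x0 - b x0 \<le> a (X n) - b (Y n)))
             \<or> ((\<forall>x. c x \<le> 0) \<and> usc_on UNIV a \<and> usc_on UNIV (\<lambda>y. - b y))"
    and e: "e > 0"
  shows "eventually (\<lambda>n. c x0 * (a x0 - b x0) - e < c (X n) * a (X n) - c (Y n) * b (Y n)) sequentially"
proof -
  have "isCont c x0" using c continuous_on_eq_continuous_at[of UNIV] by auto
  then have cX: "(\<lambda>n. c (X n)) \<longlonglongrightarrow> c x0" and cY: "(\<lambda>n. c (Y n)) \<longlonglongrightarrow> c x0"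
    using isCont_tendsto_compose X Y by blast+
  have e2: "e / 2 > 0" using e by simp
  have main: "eventually (\<lambda>n. c x0 * (a x0 - b x0) - e / 2 < c (X n) * (a (X n) - b (Y n))) sequentially"
    using sign
  proof
    assume "(\<forall>x. c x \<ge> 0) \<and> (\<forall>n. a x0 - b x0 \<le> a (X n) - b (Y n))"
    then show ?thesis by (intro eventually_product_above_nonneg[OF cX _ _ e2]) auto
  next
    assume "(\<forall>x. c x \<le> 0) \<and> usc_on UNIV a \<and> usc_on UNIV (\<lambda>y. - b y)"
    then show ?thesis
      by (intro eventually_product_above_nonpos[OF cX _ _ e2] usc_difference_limsup[OF _ _ X Y]) auto
  qed
  have "(\<lambda>n. (c (X n) - c (Y n)) * b (Y n)) \<longlonglongrightarrow> 0"
  proof (rule Lim_null_comparison)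
    show "\<forall>\<^sub>F n in sequentially. norm ((c (X n) - c (Y n)) * b (Y n)) \<le> \<bar>c (X n) - c (Y n)\<bar> * B"
      unfolding real_norm_def abs_mult by (intro always_eventually allI mult_left_mono bdd abs_ge_zero)
    have "(\<lambda>n. \<bar>c (X n) - c (Y n)\<bar> * B) \<longlonglongrightarrow> \<bar>c x0 - c x0\<bar> * B"
      by (intro tendsto_intros cX cY)
    then show "(\<lambda>n. \<bar>c (X n) - c (Y n)\<bar> * B) \<longlonglongrightarrow> 0" by simp
  qed
  then have "eventually (\<lambda>n. - (e / 2) < (c (X n) - c (Y n)) * b (Y n)) sequentially"
    using e2 by (intro order_tendstoD(1)) auto
  with main show ?thesis
  proof eventually_elim
    case (elim n)
    have "c (X n) * a (X n) - c (Y n) * b (Y n)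
        = c (X n) * (a (X n) - b (Y n)) + (c (X n) - c (Y n)) * b (Y n)"
      by (simp add: algebra_simps)
    then show ?case using elim by linarith
  qed
qed

lemma uniform_continuity_gap:
  fixes H :: "'a::real_normed_vector \<Rightarrow> real"
  assumes "continuous_on K H" "compact K" "\<And>n. s n \<in> K" "\<And>n. t n \<in> K"
    and "(\<lambda>n. s n - t n) \<longlonglongrightarrow> 0"
  shows "(\<lambda>n. H (s n) - H (t n)) \<longlonglongrightarrow> 0"
proof -
  have "uniformly_continuous_on K H" using assms(1,2) by (rule compact_uniformly_continuous)
  moreover have "(\<lambda>n. dist (s n) (t n)) \<longlonglongrightarrow> 0"
    using tendsto_norm_zero[OF assms(5)] by (simp add: dist_norm)
  ultimately have "(\<lambda>n. dist (H (s n)) (H (t n))) \<longlonglongrightarrow> 0"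
    using assms(3,4) unfolding uniformly_continuous_on_sequentially by blast
  then show ?thesis by (simp add: dist_real_def tendsto_rabs_zero_iff)
qed

lemma coercive_sublevel_bounded:
  fixes G :: "'a \<Rightarrow> 'b::real_normed_vector \<Rightarrow> real"
  assumes "\<And>M. \<exists>R. \<forall>x p. norm p \<ge> R \<longrightarrow> G x p \<ge> M"
  obtains R where "\<And>x p. G x p \<le> C \<Longrightarrow> norm p < R"
proof -
  obtain R where R: "\<forall>x p. norm p \<ge> R \<longrightarrow> G x p \<ge> C + 1" using assms by blast
  have "norm p < R" if "G x p \<le> C" for x p
    using R[rule_format, of p x] that by linarith
  then show ?thesis using that by blast
qed

lemma nonpositive_sum_limit:
  fixes s :: "'k::finite \<Rightarrow> nat \<Rightarrow> real" and t :: "nat \<Rightarrow> real"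
  assumes t: "\<And>e. e > 0 \<Longrightarrow> eventually (\<lambda>n. T - e < t n) sequentially"
    and s: "\<And>k e. e > 0 \<Longrightarrow> eventually (\<lambda>n. L k - e < s k n) sequentially"
    and nonpos: "\<And>n. t n + (\<Sum>k\<in>UNIV. s k n) \<le> 0"
  shows "T + (\<Sum>k\<in>UNIV. L k) \<le> 0"
proof (rule field_le_epsilon)
  fix \<epsilon> :: real assume "\<epsilon> > 0"
  define e where "e = \<epsilon> / (real CARD('k) + 1)"
  have e: "e > 0" and \<epsilon>: "\<epsilon> = (real CARD('k) + 1) * e" using \<open>\<epsilon> > 0\<close> unfolding e_def by auto
  have "eventually (\<lambda>n. T - e < t n \<and> (\<forall>k. L k - e < s k n)) sequentially"
    using t[OF e] eventually_all_finite[OF s[OF e]] by (rule eventually_conj)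
  then obtain n where n: "T - e < t n" "\<And>k. L k - e < s k n"
    unfolding eventually_sequentially by blast
  have "(\<Sum>k\<in>UNIV. L k - e) \<le> (\<Sum>k\<in>UNIV. s k n)"
    by (intro sum_mono less_imp_le n(2))
  then have "(\<Sum>k\<in>UNIV. L k) - real CARD('k) * e \<le> (\<Sum>k\<in>UNIV. s k n)"
    by (simp add: sum_subtractf)
  then show "T + (\<Sum>k\<in>UNIV. L k) \<le> 0 + \<epsilon>"
    using n(1) nonpos[of n] unfolding \<epsilon> by (simp add: algebra_simps)
qed

text \<open>Gradients satisfying the (scaled) subsolution inequality at points of a compact set
  are uniformly bounded, by continuity of the data and coercivity of F.\<close>
lemma subsolution_gradient_bound:
  fixes F :: "'m::finite \<Rightarrow> real^'n \<Rightarrow> real^'n \<Rightarrow> real" and u :: "real^'n \<Rightarrow> real^'m"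
  assumes fcont: "continuous_on UNIV (f j)" and dcont: "\<And>k. continuous_on UNIV (d j k)"
    and coer: "\<And>M. \<exists>R. \<forall>x p. norm p \<ge> R \<longrightarrow> F j x p \<ge> M"
    and bdd: "\<And>x k. \<bar>u x $ k\<bar> \<le> B" and mu: "0 \<le> \<mu>" "\<mu> \<le> 1" and S: "compact S"
  obtains R where "\<And>x p. x \<in> S \<Longrightarrow> F j x p \<le> \<mu> * (f j x - (\<Sum>k\<in>UNIV. d j k x * u x $ k)) \<Longrightarrow> norm p < R"
proof -
  have "continuous_on S (\<lambda>x. f j x + (\<Sum>k\<in>UNIV. \<bar>d j k x\<bar>) * B)"
    by (intro continuous_intros continuous_on_subset[OF fcont] continuous_on_subset[OF dcont]) auto
  then have "bounded ((\<lambda>x. f j x + (\<Sum>k\<in>UNIV. \<bar>d j k x\<bar>) * B) ` S)"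
    using S by (intro compact_imp_bounded compact_continuous_image)
  then obtain C where C: "\<And>x. x \<in> S \<Longrightarrow> f j x + (\<Sum>k\<in>UNIV. \<bar>d j k x\<bar>) * B \<le> C"
    unfolding bounded_iff by (auto dest: abs_le_D1)
  have source_bound: "\<mu> * (f j x - (\<Sum>k\<in>UNIV. d j k x * u x $ k)) \<le> \<bar>C\<bar>" if "x \<in> S" for x
  proof -
    have "- (\<Sum>k\<in>UNIV. d j k x * u x $ k) \<le> (\<Sum>k\<in>UNIV. \<bar>d j k x * u x $ k\<bar>)"
      using sum_abs[of "\<lambda>k. d j k x * u x $ k" UNIV] by linarith
    also have "\<dots> \<le> (\<Sum>k\<in>UNIV. \<bar>d j k x\<bar> * B)"
      by (intro sum_mono) (simp add: abs_mult mult_left_mono bdd)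
    also have "\<dots> = (\<Sum>k\<in>UNIV. \<bar>d j k x\<bar>) * B" by (simp add: sum_distrib_right)
    finally have "f j x - (\<Sum>k\<in>UNIV. d j k x * u x $ k) \<le> \<bar>C\<bar>"
      using C[OF that] abs_ge_self[of C] by linarith
    then have "\<mu> * (f j x - (\<Sum>k\<in>UNIV. d j k x * u x $ k)) \<le> \<mu> * \<bar>C\<bar>"
      using mu by (intro mult_left_mono) auto
    also have "\<dots> \<le> 1 * \<bar>C\<bar>" using mu by (intro mult_right_mono) auto
    finally show ?thesis by simp
  qed
  obtain R where "\<And>x p. F j x p \<le> \<bar>C\<bar> \<Longrightarrow> norm p < R"
    using coercive_sublevel_bounded[OF coer] by blast
  then show ?thesis using that source_bound by (meson order_trans)
qed

lemma doubled_viscosity_inequality: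
  fixes F :: "'m::finite \<Rightarrow> real^'n \<Rightarrow> real^'n \<Rightarrow> real"
  assumes sub: "visc_subsol F f d u" and sup: "visc_supersol F f d v"
    and conv: "\<And>x. convex_on UNIV (F j x)" and F0: "\<And>x. F j x 0 = 0"
    and mu: "0 < \<mu>" "\<mu> \<le> 1"
    and max: "\<And>x y. penalized (\<lambda>x. \<mu> * u x $ j) (\<lambda>y. v y $ j) \<kappa> x0 x y
                  \<le> penalized (\<lambda>x. \<mu> * u x $ j) (\<lambda>y. v y $ j) \<kappa> x0 X Y"
  defines "P \<equiv> (2 * \<kappa>) *\<^sub>R (X - Y)" and "Q \<equiv> 2 *\<^sub>R (X - x0)"
  shows "F j X (P + Q) - F j Y P + (f j Y - \<mu> * f j X)
      + (\<Sum>k\<in>UNIV. d j k X * (\<mu> * u X $ k) - d j k Y * v Y $ k) \<le> 0"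
proof -
  note visc = viscosity_at_penalized_max[OF sub sup conv F0 mu max]
  have "(\<Sum>k\<in>UNIV. d j k X * (\<mu> * u X $ k) - d j k Y * v Y $ k)
      = \<mu> * (\<Sum>k\<in>UNIV. d j k X * u X $ k) - (\<Sum>k\<in>UNIV. d j k Y * v Y $ k)"
    by (simp add: sum_subtractf sum_distrib_left mult.left_commute)
  moreover have "\<mu> * (f j X - (\<Sum>k\<in>UNIV. d j k X * u X $ k))
      = \<mu> * f j X - \<mu> * (\<Sum>k\<in>UNIV. d j k X * u X $ k)"
    by (simp add: algebra_simps)
  ultimately show ?thesis using visc unfolding P_def Q_def by linarith
qed

lemma doubling_sequences:
  fixes F :: "'m::finite \<Rightarrow> real^'n \<Rightarrow> real^'n \<Rightarrow> real"
    and f :: "'m \<Rightarrow> real^'n \<Rightarrow> real"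
    and d :: "'m \<Rightarrow> 'm \<Rightarrow> real^'n \<Rightarrow> real"
    and u v :: "real^'n \<Rightarrow> real^'m"
  assumes dcont: "\<And>k. continuous_on UNIV (d j k)" and fcont: "continuous_on UNIV (f j)"
    and conv: "\<And>x. convex_on UNIV (F j x)"
    and coer: "\<And>M. \<exists>R. \<forall>x p. norm p \<ge> R \<longrightarrow> F j x p \<ge> M"
    and F0: "\<And>x. F j x 0 = 0"
    and sub: "visc_subsol F f d u" and sup: "visc_supersol F f d v"
    and bdd: "\<And>x k. \<bar>u x $ k\<bar> \<le> B" "\<And>x k. \<bar>v x $ k\<bar> \<le> B"
    and mu: "0 < \<mu>" "\<mu> \<le> 1"
    and top: "\<And>x. \<mu> * u x $ j - v x $ j \<le> \<mu> * u x0 $ j - v x0 $ j"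
  obtains X Y P Q K where "compact K" "\<And>n. (X n, P n + Q n) \<in> K" "\<And>n. (Y n, P n) \<in> K"
    and "X \<longlonglongrightarrow> x0" "Y \<longlonglongrightarrow> x0" "Q \<longlonglongrightarrow> 0"
    and "\<And>n. \<mu> * u x0 $ j - v x0 $ j \<le> \<mu> * u (X n) $ j - v (Y n) $ j"
    and "\<And>n. F j (X n) (P n + Q n) - F j (Y n) (P n) + (f j (Y n) - \<mu> * f j (X n))
           + (\<Sum>k\<in>UNIV. d j k (X n) * (\<mu> * u (X n) $ k) - d j k (Y n) * v (Y n) $ k) \<le> 0"
proof -
  define a where "a = (\<lambda>x. \<mu> * u x $ j)"
  define b where "b = (\<lambda>y. v y $ j)"
  have usc_a: "usc_on UNIV a" and usc_b: "usc_on UNIV (\<lambda>y. - b y)"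
    using viscosity_solutions_semicontinuous[OF sub sup] mu unfolding a_def b_def by auto
  have bdd_a: "\<bar>a x\<bar> \<le> B" for x
  proof -
    have "\<bar>a x\<bar> = \<mu> * \<bar>u x $ j\<bar>" using mu by (simp add: a_def abs_mult)
    also have "\<dots> \<le> 1 * B" using mu bdd(1)[of x j] by (intro mult_mono) auto
    finally show ?thesis by simp
  qed
  have bdd_b: "\<bar>b x\<bar> \<le> B" for x using bdd(2) unfolding b_def .
  have "a x - b x \<le> a x0 - b x0" for x using top[of x] unfolding a_def b_def .
  then show ?thesis
  proof (rule concentrating_penalized_maximisers[OF usc_a usc_b bdd_a bdd_b])
    fix X Y :: "nat \<Rightarrow> real^'n" and \<kappa> :: "nat \<Rightarrow> real"
    assume max: "\<And>n x y. penalized a b (\<kappa> n) x0 x y \<le> penalized a b (\<kappa> n) x0 (X n) (Y n)"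
      and \<kappa>: "\<And>n. \<kappa> n \<ge> 1" and lim: "X \<longlonglongrightarrow> x0" "Y \<longlonglongrightarrow> x0"
      and low: "\<And>n. a x0 - b x0 \<le> a (X n) - b (Y n)"
    define P where "P n = (2 * \<kappa> n) *\<^sub>R (X n - Y n)" for n
    define Q where "Q n = 2 *\<^sub>R (X n - x0)" for n
    define \<rho> where "\<rho> = sqrt (4 * B)"
    have "B \<ge> 0" using bdd(1)[of x0 j] by linarith
    then have \<rho>0: "\<rho> \<ge> 0" unfolding \<rho>_def by simp
    have X_loc: "X n \<in> cball x0 \<rho>" and Y_loc: "Y n \<in> cball x0 (2 * \<rho>)" for n
      using penalized_max_location[OF max bdd_a bdd_b \<kappa>] unfolding \<rho>_def by auto
    obtain R where R: "\<And>x p. x \<in> cball x0 \<rho> \<Longrightarrow> F j x p \<le> \<mu> * (f j x - (\<Sum>k\<in>UNIV. d j k x * u x $ k))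
        \<Longrightarrow> norm p < R"
      using subsolution_gradient_bound[where F = F and f = f and d = d and u = u and j = j and S = "cball x0 \<rho>",
          OF fcont dcont coer bdd(1) less_imp_le[OF mu(1)] mu(2) compact_cball]
      by blast
    define K where "K = cball x0 (2 * \<rho>) \<times> cball (0::real^'n) (R + 2 * \<rho>)"
    have in_K: "(X n, P n + Q n) \<in> K \<and> (Y n, P n) \<in> K" for n
    proof -
      have PQ: "norm (P n + Q n) < R"
        using R[OF X_loc] viscosity_at_penalized_max(1)[OF sub sup conv F0 mu max[unfolded a_def b_def]]
        unfolding P_def Q_def by blast
      have Q: "norm (Q n) \<le> 2 * \<rho>" using X_loc[of n] unfolding Q_def by (simp add: dist_norm norm_minus_commute)
      have "norm (P n) \<le> norm (P n + Q n) + norm (Q n)" using norm_triangle_ineq4[of "P n + Q n" "Q n"] by simp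
      then show ?thesis using PQ Q X_loc[of n] Y_loc[of n] \<rho>0 unfolding K_def by auto
    qed
    show ?thesis
    proof (rule that[of K X P Q Y])
      show "compact K" unfolding K_def by (intro compact_Times compact_cball)
      show "(X n, P n + Q n) \<in> K" "(Y n, P n) \<in> K" for n using in_K by auto
      show "X \<longlonglongrightarrow> x0" "Y \<longlonglongrightarrow> x0" by (fact lim(1), fact lim(2))
      have "(\<lambda>n. 2 *\<^sub>R (X n - x0)) \<longlonglongrightarrow> 2 *\<^sub>R (x0 - x0)" by (intro tendsto_intros lim)
      then show "Q \<longlonglongrightarrow> 0" unfolding Q_def[abs_def] by simp
      show "\<mu> * u x0 $ j - v x0 $ j \<le> \<mu> * u (X n) $ j - v (Y n) $ j" for n
        using low[of n] unfolding a_def b_def .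
      show "F j (X n) (P n + Q n) - F j (Y n) (P n) + (f j (Y n) - \<mu> * f j (X n))
          + (\<Sum>k\<in>UNIV. d j k (X n) * (\<mu> * u (X n) $ k) - d j k (Y n) * v (Y n) $ k) \<le> 0" for n
        using doubled_viscosity_inequality[OF sub sup conv F0 mu max[unfolded a_def b_def]]
        unfolding P_def Q_def .
    qed
  qed
qed

lemma max_point_inequality:
  fixes F :: "'m::finite \<Rightarrow> real^'n \<Rightarrow> real^'n \<Rightarrow> real"
    and f :: "'m \<Rightarrow> real^'n \<Rightarrow> real"
    and d :: "'m \<Rightarrow> 'm \<Rightarrow> real^'n \<Rightarrow> real"
    and u v :: "real^'n \<Rightarrow> real^'m"
  assumes dcont: "\<And>i k. continuous_on UNIV (d i k)"
    and diag: "\<And>i x. d i i x \<ge> 0" and off: "\<And>i k x. i \<noteq> k \<Longrightarrow> d i k x \<le> 0"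
    and fcont: "\<And>i. continuous_on UNIV (f i)"
    and Fcont: "\<And>i. continuous_on UNIV (\<lambda>(x, p). F i x p)"
    and conv: "\<And>i x. convex_on UNIV (F i x)"
    and coer: "\<And>i M. \<exists>R. \<forall>x p. norm p \<ge> R \<longrightarrow> F i x p \<ge> M"
    and F0: "\<And>i x. F i x 0 = 0"
    and sub: "visc_subsol F f d u" and sup: "visc_supersol F f d v"
    and bdd: "\<And>x k. \<bar>u x $ k\<bar> \<le> B" "\<And>x k. \<bar>v x $ k\<bar> \<le> B"
    and mu: "0 < \<mu>" "\<mu> \<le> 1"
    and top: "\<And>x k. \<mu> * u x $ k - v x $ k \<le> \<mu> * u x0 $ j - v x0 $ j"
  shows "(\<Sum>k\<in>UNIV. d j k x0 * (\<mu> * u x0 $ k - v x0 $ k)) + (1 - \<mu>) * f j x0 \<le> 0"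
proof (rule doubling_sequences[OF dcont fcont conv coer F0 sub sup bdd mu top])
  fix X Y P Q :: "nat \<Rightarrow> real^'n" and K
  assume K: "compact K" "\<And>n. (X n, P n + Q n) \<in> K" "\<And>n. (Y n, P n) \<in> K"
    and lim: "X \<longlonglongrightarrow> x0" "Y \<longlonglongrightarrow> x0" "Q \<longlonglongrightarrow> 0"
    and low: "\<And>n. \<mu> * u x0 $ j - v x0 $ j \<le> \<mu> * u (X n) $ j - v (Y n) $ j"
    and ineq: "\<And>n. F j (X n) (P n + Q n) - F j (Y n) (P n) + (f j (Y n) - \<mu> * f j (X n))
           + (\<Sum>k\<in>UNIV. d j k (X n) * (\<mu> * u (X n) $ k) - d j k (Y n) * v (Y n) $ k) \<le> 0"
  have "(\<lambda>n. F j (X n) (P n + Q n) - F j (Y n) (P n) + (f j (Y n) - \<mu> * f j (X n)))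
      \<longlonglongrightarrow> 0 + (f j x0 - \<mu> * f j x0)"
  proof (rule tendsto_add)
    have "(\<lambda>n. (X n - Y n, Q n)) \<longlonglongrightarrow> (x0 - x0, 0)" by (intro tendsto_intros lim)
    then have "(\<lambda>n. (X n, P n + Q n) - (Y n, P n)) \<longlonglongrightarrow> 0" by (simp add: zero_prod_def)
    from uniform_continuity_gap[OF continuous_on_subset[OF Fcont subset_UNIV] K this]
    show "(\<lambda>n. F j (X n) (P n + Q n) - F j (Y n) (P n)) \<longlonglongrightarrow> 0" by simp
    have "isCont (f j) x0" using fcont continuous_on_eq_continuous_at[of UNIV] by auto
    then show "(\<lambda>n. f j (Y n) - \<mu> * f j (X n)) \<longlonglongrightarrow> f j x0 - \<mu> * f j x0"
      by (intro tendsto_intros isCont_tendsto_compose[of x0 "f j"] lim)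
  qed
  then have source: "eventually (\<lambda>n. (1 - \<mu>) * f j x0 - e
      < F j (X n) (P n + Q n) - F j (Y n) (P n) + (f j (Y n) - \<mu> * f j (X n))) sequentially"
    if "e > 0" for e
    using that by (intro order_tendstoD(1)) (auto simp: algebra_simps)
  have coupling: "eventually (\<lambda>n. d j k x0 * (\<mu> * u x0 $ k - v x0 $ k) - e
      < d j k (X n) * (\<mu> * u (X n) $ k) - d j k (Y n) * v (Y n) $ k) sequentially"
    if "e > 0" for k e
  proof (rule coupling_term_eventually[where c = "d j k" and a = "\<lambda>x. \<mu> * u x $ k" and b = "\<lambda>y. v y $ k",
        OF dcont lim(1,2) bdd(2) _ that])
    show "((\<forall>x. d j k x \<ge> 0) \<and> (\<forall>n. \<mu> * u x0 $ k - v x0 $ k \<le> \<mu> * u (X n) $ k - v (Y n) $ k))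
        \<or> ((\<forall>x. d j k x \<le> 0) \<and> usc_on UNIV (\<lambda>x. \<mu> * u x $ k) \<and> usc_on UNIV (\<lambda>y. - v y $ k))"
    proof (cases "k = j")
      case True
      then show ?thesis using diag low by auto
    next
      case False
      then show ?thesis
        using off viscosity_solutions_semicontinuous[OF sub sup less_imp_le[OF mu(1)]] by (intro disjI2) auto
    qed
  qed
  show ?thesis using nonpositive_sum_limit[OF source coupling ineq] by (simp add: add.commute)
qed

lemma max_component_row:
  fixes D :: "'m::finite \<Rightarrow> 'm \<Rightarrow> real" and w :: "'m \<Rightarrow> real"
  assumes off: "\<And>l. l \<noteq> i \<Longrightarrow> D i l \<le> 0" and rowsum: "(\<Sum>l\<in>UNIV. D i l) \<ge> 0"
    and wmax: "\<And>l. w l \<le> w i" and pos: "w i > 0" and c: "c \<ge> 0"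
    and ineq: "(\<Sum>l\<in>UNIV. D i l * w l) + c \<le> 0"
  shows "(\<Sum>l\<in>UNIV. D i l) = 0 \<and> c = 0 \<and> (\<forall>l. D i l \<noteq> 0 \<longrightarrow> w l = w i)"
proof -
  have "(\<Sum>l\<in>UNIV. (- D i l) * (w i - w l)) = (\<Sum>l\<in>UNIV. D i l * w l - D i l * w i)"
    by (intro sum.cong) (auto simp: algebra_simps)
  then have split: "(\<Sum>l\<in>UNIV. D i l * w l)
      = (\<Sum>l\<in>UNIV. D i l) * w i + (\<Sum>l\<in>UNIV. (- D i l) * (w i - w l))"
    by (simp add: sum_subtractf sum_distrib_right)
  have nonneg: "(- D i l) * (w i - w l) \<ge> 0" for l
    using off[of l] wmax[of l] by (cases "l = i") (auto intro: mult_nonpos_nonneg)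
  have "(\<Sum>l\<in>UNIV. D i l) * w i \<ge> 0" using rowsum pos by simp
  moreover have "(\<Sum>l\<in>UNIV. (- D i l) * (w i - w l)) \<ge> 0" using nonneg by (simp add: sum_nonneg)
  ultimately have zero: "(\<Sum>l\<in>UNIV. D i l) * w i = 0" "(\<Sum>l\<in>UNIV. (- D i l) * (w i - w l)) = 0" "c = 0"
    using ineq split c by linarith+
  have prod0: "(- D i l) * (w i - w l) = 0" for l
    using zero(2) nonneg sum_nonneg_eq_0_iff[of UNIV "\<lambda>l. (- D i l) * (w i - w l)"] by simp
  have "D i l \<noteq> 0 \<longrightarrow> w l = w i" for l using prod0[of l] by auto
  then show ?thesis using zero pos by simp
qed

lemma weighted_gap_bound:
  fixes \<Lambda> p q :: "'m::finite \<Rightarrow> real"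
  assumes \<Lambda>: "\<And>i. \<Lambda> i \<ge> 0" "(\<Sum>i\<in>UNIV. \<Lambda> i) > 0"
    and weighted: "(\<Sum>i\<in>UNIV. \<Lambda> i * p i) \<le> (\<Sum>i\<in>UNIV. \<Lambda> i * q i)"
    and q: "\<And>i. q i = \<mu> * p i - M" and bdd: "\<And>i. \<bar>p i\<bar> \<le> B" and mu: "\<mu> \<le> 1"
  shows "M \<le> (1 - \<mu>) * B"
proof -
  have "(\<Sum>i\<in>UNIV. \<Lambda> i * q i) = \<mu> * (\<Sum>i\<in>UNIV. \<Lambda> i * p i) - M * (\<Sum>i\<in>UNIV. \<Lambda> i)"
    unfolding q by (simp add: algebra_simps sum_subtractf sum_distrib_left sum_distrib_right)
  then have "M * (\<Sum>i\<in>UNIV. \<Lambda> i) \<le> (1 - \<mu>) * (\<Sum>i\<in>UNIV. \<Lambda> i * (- p i))"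
    using weighted by (simp add: algebra_simps sum_negf)
  also have "\<dots> \<le> (1 - \<mu>) * (\<Sum>i\<in>UNIV. \<Lambda> i * B)"
    using \<Lambda>(1) bdd mu by (intro mult_left_mono sum_mono) (auto simp: abs_le_iff)
  also have "\<dots> = (1 - \<mu>) * ((\<Sum>i\<in>UNIV. \<Lambda> i) * B)"
    by (simp only: sum_distrib_right)
  also have "\<dots> = ((1 - \<mu>) * B) * (\<Sum>i\<in>UNIV. \<Lambda> i)"
    by (simp only: mult_ac)
  finally show ?thesis using \<Lambda>(2) by simp
qed

lemma irreducible_closed_set:
  assumes "irreducible_at d x" "i \<in> I" "\<And>i l. i \<in> I \<Longrightarrow> d i l x \<noteq> 0 \<Longrightarrow> l \<in> I"
  shows "I = UNIV"
  using assms unfolding irreducible_at_def by blast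

lemma degenerate_maximum_bound:
  fixes d :: "'m::finite \<Rightarrow> 'm \<Rightarrow> real^'n \<Rightarrow> real" and u v \<Lambda> :: "real^'n \<Rightarrow> real^'m"
    and w :: "'m \<Rightarrow> real"
  assumes irred: "irreducible_at d x0"
    and w: "\<And>i. w i = \<mu> * u x0 $ i - v x0 $ i" and wj: "w j = M"
    and row: "\<And>i. w i = M \<Longrightarrow> (\<Sum>l\<in>UNIV. d i l x0) = 0 \<and> f i x0 = 0 \<and> (\<forall>l. d i l x0 \<noteq> 0 \<longrightarrow> w l = M)"
    and \<Lambda>: "\<forall>x\<in>setA f d. (\<forall>i. \<Lambda> x $ i \<ge> 0) \<and> (\<Sum>i\<in>UNIV. \<Lambda> x $ i) > 0 \<and>
              (\<Sum>i\<in>UNIV. \<Lambda> x $ i * u x $ i) \<le> (\<Sum>i\<in>UNIV. \<Lambda> x $ i * v x $ i)"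
    and bdd: "\<And>i. \<bar>u x0 $ i\<bar> \<le> B" and mu: "\<mu> \<le> 1"
  shows "M \<le> (1 - \<mu>) * B"
proof -
  have "{i. w i = M} = UNIV"
  proof (rule irreducible_closed_set[OF irred])
    show "j \<in> {i. w i = M}" using wj by simp
    show "l \<in> {i. w i = M}" if "i \<in> {i. w i = M}" "d i l x0 \<noteq> 0" for i l
      using row[of i] that by auto
  qed
  then have all: "w i = M" for i by auto
  then have "x0 \<in> setA f d"
    unfolding setA_def setF_def setD_def using row by simp
  then have "\<And>i. \<Lambda> x0 $ i \<ge> 0" "(\<Sum>i\<in>UNIV. \<Lambda> x0 $ i) > 0"
      "(\<Sum>i\<in>UNIV. \<Lambda> x0 $ i * u x0 $ i) \<le> (\<Sum>i\<in>UNIV. \<Lambda> x0 $ i * v x0 $ i)"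
    using \<Lambda> by auto
  moreover have "v x0 $ i = \<mu> * u x0 $ i - M" for i using all[of i] w[of i] by simp
  ultimately show ?thesis
    using weighted_gap_bound[of "\<lambda>i. \<Lambda> x0 $ i" "\<lambda>i. u x0 $ i" "\<lambda>i. v x0 $ i" \<mu> M B] bdd mu
    by simp
qed

lemma maximal_rows_degenerate:
  fixes F :: "'m::finite \<Rightarrow> real^'n \<Rightarrow> real^'n \<Rightarrow> real"
    and f :: "'m \<Rightarrow> real^'n \<Rightarrow> real"
    and d :: "'m \<Rightarrow> 'm \<Rightarrow> real^'n \<Rightarrow> real"
    and u v :: "real^'n \<Rightarrow> real^'m"
  assumes dcont: "\<And>i k. continuous_on UNIV (d i k)"
    and diag: "\<And>i x. d i i x \<ge> 0" and off: "\<And>i k x. i \<noteq> k \<Longrightarrow> d i k x \<le> 0"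
    and rowsum: "\<And>i x. (\<Sum>k\<in>UNIV. d i k x) \<ge> 0"
    and fcont: "\<And>i. continuous_on UNIV (f i)" and fnonneg: "\<And>i x. f i x \<ge> 0"
    and Fcont: "\<And>i. continuous_on UNIV (\<lambda>(x, p). F i x p)"
    and conv: "\<And>i x. convex_on UNIV (F i x)"
    and coer: "\<And>i M. \<exists>R. \<forall>x p. norm p \<ge> R \<longrightarrow> F i x p \<ge> M"
    and F0: "\<And>i x. F i x 0 = 0"
    and sub: "visc_subsol F f d u" and sup: "visc_supersol F f d v"
    and bdd: "\<And>x k. \<bar>u x $ k\<bar> \<le> B" "\<And>x k. \<bar>v x $ k\<bar> \<le> B"
    and mu: "0 < \<mu>" "\<mu> < 1"
    and top: "\<And>x k. \<mu> * u x $ k - v x $ k \<le> \<mu> * u x0 $ i - v x0 $ i"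
    and pos: "\<mu> * u x0 $ i - v x0 $ i > 0"
  shows "(\<Sum>l\<in>UNIV. d i l x0) = 0 \<and> f i x0 = 0
    \<and> (\<forall>l. d i l x0 \<noteq> 0 \<longrightarrow> \<mu> * u x0 $ l - v x0 $ l = \<mu> * u x0 $ i - v x0 $ i)"
proof -
  have "(\<Sum>l\<in>UNIV. d i l x0) = 0 \<and> (1 - \<mu>) * f i x0 = 0
      \<and> (\<forall>l. d i l x0 \<noteq> 0 \<longrightarrow> \<mu> * u x0 $ l - v x0 $ l = \<mu> * u x0 $ i - v x0 $ i)"
  proof (rule max_component_row[where D = "\<lambda>i l. d i l x0" and w = "\<lambda>l. \<mu> * u x0 $ l - v x0 $ l"])
    show "\<And>l. l \<noteq> i \<Longrightarrow> d i l x0 \<le> 0" using off by auto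
    show "(\<Sum>l\<in>UNIV. d i l x0) \<ge> 0" by (rule rowsum)
    show "\<And>l. \<mu> * u x0 $ l - v x0 $ l \<le> \<mu> * u x0 $ i - v x0 $ i" by (rule top)
    show "\<mu> * u x0 $ i - v x0 $ i > 0" by (rule pos)
    show "(1 - \<mu>) * f i x0 \<ge> 0" using mu fnonneg[of i x0] by simp
    show "(\<Sum>l\<in>UNIV. d i l x0 * (\<mu> * u x0 $ l - v x0 $ l)) + (1 - \<mu>) * f i x0 \<le> 0"
      using mu by (intro max_point_inequality[OF dcont diag off fcont Fcont conv coer F0 sub sup bdd _ _ top]) auto
  qed
  then show ?thesis using mu by simp
qed

lemma scaled_comparison:
  fixes F :: "'m::finite \<Rightarrow> real^'n \<Rightarrow> real^'n \<Rightarrow> real"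
    and f :: "'m \<Rightarrow> real^'n \<Rightarrow> real"
    and d :: "'m \<Rightarrow> 'm \<Rightarrow> real^'n \<Rightarrow> real"
    and u v :: "real^'n \<Rightarrow> real^'m"
  assumes dcont: "\<And>i k. continuous_on UNIV (d i k)"
    and diag: "\<And>i x. d i i x \<ge> 0" and off: "\<And>i k x. i \<noteq> k \<Longrightarrow> d i k x \<le> 0"
    and rowsum: "\<And>i x. (\<Sum>k\<in>UNIV. d i k x) \<ge> 0"
    and fcont: "\<And>i. continuous_on UNIV (f i)" and fnonneg: "\<And>i x. f i x \<ge> 0"
    and Fcont: "\<And>i. continuous_on UNIV (\<lambda>(x, p). F i x p)"
    and conv: "\<And>i x. convex_on UNIV (F i x)"
    and coer: "\<And>i M. \<exists>R. \<forall>x p. norm p \<ge> R \<longrightarrow> F i x p \<ge> M"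
    and F0: "\<And>i x. F i x 0 = 0"
    and u_per: "periodic u" and v_per: "periodic v"
    and sub: "visc_subsol F f d u" and sup: "visc_supersol F f d v"
    and bdd: "\<And>x k. \<bar>u x $ k\<bar> \<le> B" "\<And>x k. \<bar>v x $ k\<bar> \<le> B"
    and cases:
      "(\<forall>i x. (\<Sum>j\<in>UNIV. d i j x) > 0) \<or>
       ((\<forall>x. irreducible_at d x) \<and>
        (\<exists>\<Lambda> :: real^'n \<Rightarrow> real^'m.
           (\<forall>x\<in>setA f d. (\<forall>i. \<Lambda> x $ i \<ge> 0) \<and> (\<Sum>i\<in>UNIV. \<Lambda> x $ i) > 0 \<and>
              (\<Sum>i\<in>UNIV. \<Lambda> x $ i * u x $ i) \<le> (\<Sum>i\<in>UNIV. \<Lambda> x $ i * v x $ i))))"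
    and mu: "0 < \<mu>" "\<mu> < 1"
  shows "\<mu> * u x $ k - v x $ k \<le> (1 - \<mu>) * B"
proof -
  define w where "w k x = \<mu> * u x $ k - v x $ k" for k x
  have "usc_on UNIV (\<lambda>x. \<mu> * u x $ k + - v x $ k)" for k
    using mu by (intro usc_on_add viscosity_solutions_semicontinuous[OF sub sup]) auto
  then have usc_w: "usc_on UNIV (w k)" for k unfolding w_def by simp
  have per_w: "periodic (w k)" for k
    using u_per v_per unfolding periodic_def w_def by simp
  obtain j x0 where top: "\<And>k x. w k x \<le> w j x0"
    using periodic_family_attains_max[of w, OF per_w usc_w] by blast
  define M where "M = w j x0"
  have row: "(\<Sum>l\<in>UNIV. d i l x0) = 0 \<and> f i x0 = 0 \<and> (\<forall>l. d i l x0 \<noteq> 0 \<longrightarrow> w l x0 = M)"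
    if wi: "w i x0 = M" and M: "M > 0" for i
    using maximal_rows_degenerate[OF dcont diag off rowsum fcont fnonneg Fcont conv coer F0 sub sup bdd mu,
        of x0 i] top wi M
    unfolding w_def M_def by simp
  show ?thesis
  proof (rule ccontr)
    assume "\<not> ?thesis"
    moreover have "\<mu> * u x $ k - v x $ k \<le> M" using top[of k x] unfolding M_def w_def .
    ultimately have big: "M > (1 - \<mu>) * B" by linarith
    moreover have "B \<ge> 0" using bdd(1)[of x k] by linarith
    then have "(1 - \<mu>) * B \<ge> 0" using mu by simp
    ultimately have M: "M > 0" by linarith
    from cases show False
    proof
      assume "\<forall>i x. (\<Sum>j\<in>UNIV. d i j x) > 0"
      then have "(\<Sum>l\<in>UNIV. d j l x0) > 0" by blast
      moreover have "(\<Sum>l\<in>UNIV. d j l x0) = 0" using row[of j] M unfolding M_def by blast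
      ultimately show False by simp
    next
      assume degenerate: "(\<forall>x. irreducible_at d x) \<and>
        (\<exists>\<Lambda> :: real^'n \<Rightarrow> real^'m.
           (\<forall>x\<in>setA f d. (\<forall>i. \<Lambda> x $ i \<ge> 0) \<and> (\<Sum>i\<in>UNIV. \<Lambda> x $ i) > 0 \<and>
              (\<Sum>i\<in>UNIV. \<Lambda> x $ i * u x $ i) \<le> (\<Sum>i\<in>UNIV. \<Lambda> x $ i * v x $ i)))"
      then obtain \<Lambda> :: "real^'n \<Rightarrow> real^'m" where irred: "irreducible_at d x0"
        and \<Lambda>: "\<forall>x\<in>setA f d. (\<forall>i. \<Lambda> x $ i \<ge> 0) \<and> (\<Sum>i\<in>UNIV. \<Lambda> x $ i) > 0 \<and>
              (\<Sum>i\<in>UNIV. \<Lambda> x $ i * u x $ i) \<le> (\<Sum>i\<in>UNIV. \<Lambda> x $ i * v x $ i)"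
        by blast
      have "w i x0 = \<mu> * u x0 $ i - v x0 $ i" for i unfolding w_def ..
      from degenerate_maximum_bound[OF irred this _ row[OF _ M] \<Lambda> bdd(1) less_imp_le[OF mu(2)]]
      have "M \<le> (1 - \<mu>) * B" unfolding M_def by simp
      then show False using big by simp
    qed
  qed
qed

lemma bounded_range_components:
  fixes u :: "'a \<Rightarrow> real^'m"
  assumes "bounded (range u)"
  obtains B where "\<And>x k. \<bar>u x $ k\<bar> \<le> B"
proof -
  obtain B where "\<And>x. norm (u x) \<le> B" using assms unfolding bounded_iff by auto
  then have "\<bar>u x $ k\<bar> \<le> B" for x k using component_le_norm_cart[of "u x" k] by (meson order_trans)
  then show ?thesis using that by blast
qed

theorem theorem3p1:
  fixes F :: "'m::finite \<Rightarrow> real^'n \<Rightarrow> real^'n \<Rightarrow> real"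
    and f :: "'m \<Rightarrow> real^'n \<Rightarrow> real"
    and d :: "'m \<Rightarrow> 'm \<Rightarrow> real^'n \<Rightarrow> real"
    and u v :: "real^'n \<Rightarrow> real^'m"
  assumes H3_cont: "\<And>i j. continuous_on UNIV (d i j)"
    and H3_per: "\<And>i j. periodic (d i j)"
    and H3_diag: "\<And>i x. d i i x \<ge> 0"
    and H3_off: "\<And>i j x. i \<noteq> j \<Longrightarrow> d i j x \<le> 0"
    and H3_rowsum: "\<And>i x. (\<Sum>j\<in>UNIV. d i j x) \<ge> 0"
    and H0_f: "\<And>i. continuous_on UNIV (f i)" "\<And>i. periodic (f i)"
    and H0_F: "\<And>i. continuous_on UNIV (\<lambda>(x, p). F i x p)"
      "\<And>i p. periodic (\<lambda>x. F i x p)"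
    and H1_convex: "\<And>i x. convex_on UNIV (F i x)"
    and H1_coercive: "\<And>i M. \<exists>R. \<forall>x p. norm p \<ge> R \<longrightarrow> F i x p \<ge> M"
    and H1_zero: "\<And>i x. F i x 0 = 0"
    and H1_nonneg: "\<And>i x p. F i x p \<ge> F i x 0"
    and H2: "\<And>i x. f i x \<ge> 0"
    and u_per: "periodic u" and u_bdd: "bounded (range u)"
    and v_per: "periodic v" and v_bdd: "bounded (range v)"
    and u_sub: "visc_subsol F f d u"
    and v_super: "visc_supersol F f d v"
    and cases:
      "(\<forall>i x. (\<Sum>j\<in>UNIV. d i j x) > 0) \<or>
       ((\<forall>x. irreducible_at d x) \<and>
        (\<exists>\<Lambda> :: real^'n \<Rightarrow> real^'m.
           (\<forall>x\<in>setA f d. (\<forall>i. \<Lambda> x $ i \<ge> 0) \<and> (\<Sum>i\<in>UNIV. \<Lambda> x $ i) > 0 \<and>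
              (\<Sum>i\<in>UNIV. \<Lambda> x $ i * u x $ i) \<le> (\<Sum>i\<in>UNIV. \<Lambda> x $ i * v x $ i))))"
  shows "\<forall>x i. u x $ i \<le> v x $ i"
proof -
  obtain Bu where Bu: "\<And>x k. \<bar>u x $ k\<bar> \<le> Bu" using bounded_range_components[OF u_bdd] by blast
  obtain Bv where Bv: "\<And>x k. \<bar>v x $ k\<bar> \<le> Bv" using bounded_range_components[OF v_bdd] by blast
  define B where "B = max Bu Bv"
  have bdd: "\<And>x k. \<bar>u x $ k\<bar> \<le> B" "\<And>x k. \<bar>v x $ k\<bar> \<le> B"
    unfolding B_def using Bu Bv by (meson max.coboundedI1 max.coboundedI2)+
  have "u x $ k \<le> v x $ k" for x k
  proof -
    have "eventually (\<lambda>\<mu>. \<mu> * u x $ k - v x $ k \<le> (1 - \<mu>) * B) (at_left 1)"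
      using eventually_at_left_real[of 0 1, OF zero_less_one]
    proof eventually_elim
      case (elim \<mu>)
      then show ?case
        using scaled_comparison[OF H3_cont H3_diag H3_off H3_rowsum H0_f(1) H2 H0_F(1) H1_convex
            H1_coercive H1_zero u_per v_per u_sub v_super bdd cases] by simp
    qed
    moreover have "((\<lambda>\<mu>. \<mu> * u x $ k - v x $ k) \<longlongrightarrow> 1 * u x $ k - v x $ k) (at_left 1)"
      and "((\<lambda>\<mu>. (1 - \<mu>) * B) \<longlongrightarrow> (1 - 1) * B) (at_left (1::real))"
      by (intro tendsto_intros)+
    ultimately have "1 * u x $ k - v x $ k \<le> (1 - 1) * B"
      by (intro tendsto_le[OF trivial_limit_at_left_real])
    then show ?thesis by simp
  qed
  then show ?thesis by blast
qed

end
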